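(* Let $\mathfrak{C}$ be a chromosome-set. A finite string $s$ is a multiplicity-extremal substring (MES) for $\mathfrak{C}$ if and only if there exist characters $c_1\neq c_2$ and $c_3\neq c_4$ such that $c_1s$, $c_2s$, $sc_3$ and $sc_4$ are all substrings of $\mathfrak{C}$.
   Context: All strings are over a fixed finite alphabet $\Sigma$. A cyclic string is a bi-infinite periodic word $\mathbb{Z}\to\Sigma$ up to shift, with least period $d$. A finite string is a substring of a cyclic string $c$ if it is a contiguous block of $c$; its number of occurrences in $c$ is the number of starting positions modulo $d$ at which it appears; a cyclic string is a substring only of itself. A chromosome-set is a (possibly infinite) set of cyclic strings; a string is a substring of it if it is a substring of one of its elements. A (finite or cyclic) string $s$ is a multiplicity-extremal substring (MES) for $\mathfrak{C}$ if $s$ is a substring of $\mathfrak{C}$ and every proper superstring $t$ of $s$ (a string $t\neq s$ containing $s$ as a substring) has, in at least one element of $\mathfrak{C}$, strictly fewer occurrences than $s$. *)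

theory Defs
  imports Main
begin

text \<open>A cyclic string is represented by a bi-infinite periodic word \<open>int \<Rightarrow> 'a\<close>;
  two representatives denote the same cyclic string iff they differ by a shift.\<close>

definition periodic :: "(int \<Rightarrow> 'a) \<Rightarrow> bool" where
  "periodic w \<longleftrightarrow> (\<exists>p::int. p > 0 \<and> (\<forall>i. w (i + p) = w i))"

definition period :: "(int \<Rightarrow> 'a) \<Rightarrow> nat" where
  "period w = (LEAST p::nat. p > 0 \<and> (\<forall>i. w (i + int p) = w i))"

definition shift_eq :: "(int \<Rightarrow> 'a) \<Rightarrow> (int \<Rightarrow> 'a) \<Rightarrow> bool" where
  "shift_eq w v \<longleftrightarrow> (\<exists>k::int. \<forall>i. v i = w (i + k))"

datatype 'a str = Fin "'a list" | Cyc "int \<Rightarrow> 'a"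

fun valid_str :: "'a str \<Rightarrow> bool" where
  "valid_str (Fin _) = True"
| "valid_str (Cyc w) = periodic w"

fun same_str :: "'a str \<Rightarrow> 'a str \<Rightarrow> bool" where
  "same_str (Fin x) (Fin y) = (x = y)"
| "same_str (Cyc w) (Cyc v) = shift_eq w v"
| "same_str _ _ = False"

definition occurs_at :: "'a list \<Rightarrow> (int \<Rightarrow> 'a) \<Rightarrow> int \<Rightarrow> bool" where
  "occurs_at s w j \<longleftrightarrow> (\<forall>k<length s. w (j + int k) = s ! k)"

fun substr :: "'a str \<Rightarrow> 'a str \<Rightarrow> bool" where
  "substr (Fin s) (Fin t) = (\<exists>u v. t = u @ s @ v)"
| "substr (Fin s) (Cyc c) = (\<exists>j. occurs_at s c j)"
| "substr (Cyc s) (Cyc c) = shift_eq s c"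
| "substr (Cyc _) (Fin _) = False"

fun occ :: "'a str \<Rightarrow> (int \<Rightarrow> 'a) \<Rightarrow> nat" where
  "occ (Fin s) c = card {j \<in> {0..<int (period c)}. occurs_at s c j}"
| "occ (Cyc t) c = (if shift_eq t c then 1 else 0)"

definition chromosome_set :: "(int \<Rightarrow> 'a) set \<Rightarrow> bool" where
  "chromosome_set C \<longleftrightarrow> (\<forall>c\<in>C. periodic c)"

definition substr_C :: "'a str \<Rightarrow> (int \<Rightarrow> 'a) set \<Rightarrow> bool" where
  "substr_C s C \<longleftrightarrow> (\<exists>c\<in>C. substr s (Cyc c))"

definition MES :: "(int \<Rightarrow> 'a) set \<Rightarrow> 'a str \<Rightarrow> bool" where
  "MES C s \<longleftrightarrow> substr_C s C \<and>
     (\<forall>t. valid_str t \<and> \<not> same_str t s \<and> substr s t \<longrightarrow> (\<exists>c\<in>C. occ t c < occ s c))"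

end

theory Submission imports Defs begin

text \<open>Modulo the period of a chromosome, shifting positions by \<open>|u|\<close> maps the occurrences
  of a finite superstring \<open>u s v\<close> injectively into those of \<open>s\<close>. If all occurrences of \<open>s\<close>
  are preceded by one letter \<open>a\<close>, the map is onto for \<open>a s\<close>, so \<open>a s\<close> has the same
  multiplicities as \<open>s\<close> and \<open>s\<close> is not an MES; symmetrically on the right. Conversely, with
  two distinct left and two distinct right neighbours, every proper finite superstring \<open>u s v\<close>
  misses an occurrence of \<open>s\<close> that disagrees with the last letter of \<open>u\<close> or the first
  letter of \<open>v\<close>, so its multiplicity drops. A cyclic superstring occurs at most once in a
  chromosome; it is either absent from a chromosome containing \<open>c\<^sub>1 s\<close> or \<open>c\<^sub>2 s\<close>, or it
  is one chromosome containing both, hence containing \<open>s\<close> twice.\<close>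

lemma least_period:
  assumes "periodic c"
  shows "period c > 0 \<and> (\<forall>i. c (i + int (period c)) = c i)"
proof -
  from assms obtain p :: int where "p > 0" "\<forall>i. c (i + p) = c i"
    unfolding periodic_def by blast
  then have "\<exists>q::nat. q > 0 \<and> (\<forall>i. c (i + int q) = c i)"
    by (intro exI[of _ "nat p"]) auto
  then show ?thesis
    unfolding period_def by (rule LeastI_ex)
qed

lemma period_pos: "periodic c \<Longrightarrow> period c > 0"
  using least_period by blast

lemma periodic_add_period: "periodic c \<Longrightarrow> c (i + int (period c)) = c i"
  using least_period by blast

lemma periodic_add_mult:
  fixes f :: "int \<Rightarrow> 'b"
  assumes "\<And>x. f (x + p) = f x"
  shows "f (x + m * p) = f x"
proof (induction m rule: int_induct[where k = 0])
  case (step1 i)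
  then show ?case
    using assms[of "x + i * p"] by (simp add: algebra_simps)
next
  case (step2 i)
  then show ?case
    using assms[of "x + (i - 1) * p"] by (simp add: algebra_simps)
qed simp

lemma periodic_mod:
  fixes f :: "int \<Rightarrow> 'b"
  assumes "\<And>x. f (x + p) = f x"
  shows "f (x mod p) = f x"
  using periodic_add_mult[of f p x "- (x div p)", OF assms]
  by (simp add: minus_div_mult_eq_mod[symmetric])

lemma periodic_mod_cong:
  fixes f :: "int \<Rightarrow> 'b"
  assumes "\<And>x. f (x + p) = f x" and "x mod p = y mod p"
  shows "f x = f y"
  by (metis assms periodic_mod)

lemma occurs_at_append:
  "occurs_at (x @ y) c j \<longleftrightarrow> occurs_at x c j \<and> occurs_at y c (j + int (length x))"
proof
  assume "occurs_at (x @ y) c j"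
  then have xy: "\<And>k. k < length (x @ y) \<Longrightarrow> c (j + int k) = (x @ y) ! k"
    unfolding occurs_at_def by blast
  have "c (j + int k) = x ! k" if "k < length x" for k
    using xy[of k] that by (simp add: nth_append)
  moreover have "c (j + int (length x) + int k) = y ! k" if "k < length y" for k
    using xy[of "length x + k"] that by (simp add: add.assoc)
  ultimately show "occurs_at x c j \<and> occurs_at y c (j + int (length x))"
    unfolding occurs_at_def by blast
next
  assume "occurs_at x c j \<and> occurs_at y c (j + int (length x))"
  then have x: "\<And>k. k < length x \<Longrightarrow> c (j + int k) = x ! k"
    and y: "\<And>k. k < length y \<Longrightarrow> c (j + int (length x) + int k) = y ! k"
    unfolding occurs_at_def by blast+
  have "c (j + int k) = (x @ y) ! k" if k: "k < length (x @ y)" for k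
  proof (cases "k < length x")
    case True
    then show ?thesis using x by (simp add: nth_append)
  next
    case False
    then have "j + int (length x) + int (k - length x) = j + int k" by simp
    then show ?thesis
      using False k y[of "k - length x"] by (simp add: nth_append)
  qed
  then show "occurs_at (x @ y) c j"
    unfolding occurs_at_def by blast
qed

lemma occurs_at_singleton [simp]: "occurs_at [a] c j \<longleftrightarrow> c j = a"
  by (simp add: occurs_at_def)

lemma occurs_at_Cons: "occurs_at (a # s) c j \<longleftrightarrow> c j = a \<and> occurs_at s c (j + 1)"
  using occurs_at_append[of "[a]" s] by simp

lemma occurs_at_add_period:
  assumes "periodic c"
  shows "occurs_at s c (j + int (period c)) = occurs_at s c j"
proof -
  have "c (j + int (period c) + int k) = c (j + int k)" for k
    using periodic_add_period[OF assms, of "j + int k"] by (simp add: ac_simps)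
  then show ?thesis
    unfolding occurs_at_def by simp
qed

lemma occurs_at_shift: "occurs_at s (\<lambda>i. w (i + k)) j = occurs_at s w (j + k)"
  unfolding occurs_at_def by (simp add: algebra_simps)

lemma substr_Cyc_shift_eq:
  assumes "shift_eq w c"
  shows "substr (Fin s) (Cyc c) \<longleftrightarrow> substr (Fin s) (Cyc w)"
proof -
  from assms obtain k where "c = (\<lambda>i. w (i + k))"
    unfolding shift_eq_def by blast
  then have "occurs_at s c j \<longleftrightarrow> occurs_at s w (j + k)" for j
    by (simp add: occurs_at_shift)
  then show ?thesis
    by (auto intro: exI[of _ "_ - k"])
qed

lemma occurs_at_mod_period:
  "periodic c \<Longrightarrow> occurs_at s c (j mod int (period c)) = occurs_at s c j"
  by (rule periodic_mod) (rule occurs_at_add_period)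

lemma finite_residues: "finite {j \<in> {0..<p::int}. P j}"
  by (rule finite_subset[of _ "{0..<p}"]) auto

lemma card_residues_shift_le:
  fixes p d :: int
  assumes "p > 0" and P: "\<And>x. P (x + p) = P x"
  shows "card {j \<in> {0..<p}. P (j + d)} \<le> card {j \<in> {0..<p}. P j}"
proof (rule card_inj_on_le)
  let ?f = "\<lambda>j. (j + d) mod p"
  show "inj_on ?f {j \<in> {0..<p}. P (j + d)}"
  proof (rule inj_onI)
    fix x y
    assume "x \<in> {j \<in> {0..<p}. P (j + d)}" "y \<in> {j \<in> {0..<p}. P (j + d)}" "?f x = ?f y"
    moreover from \<open>?f x = ?f y\<close> have "x mod p = y mod p"
      by (simp add: mod_eq_dvd_iff)
    ultimately show "x = y"
      by simp
  qed
  show "?f ` {j \<in> {0..<p}. P (j + d)} \<subseteq> {j \<in> {0..<p}. P j}"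
    using \<open>p > 0\<close> periodic_mod[of P p, OF P] by auto
qed (rule finite_residues)

lemma card_residues_shift:
  fixes p d :: int
  assumes "p > 0" and "\<And>x. P (x + p) = P x"
  shows "card {j \<in> {0..<p}. P (j + d)} = card {j \<in> {0..<p}. P j}"
proof (rule antisym)
  show "card {j \<in> {0..<p}. P (j + d)} \<le> card {j \<in> {0..<p}. P j}"
    using assms by (rule card_residues_shift_le)
  have "P (x + p + d) = P (x + d)" for x
    using assms(2)[of "x + d"] by (simp add: ac_simps)
  from card_residues_shift_le[of p "\<lambda>j. P (j + d)" "- d", OF assms(1) this]
  show "card {j \<in> {0..<p}. P j} \<le> card {j \<in> {0..<p}. P (j + d)}"
    by simp
qed

lemma card_residues_less_shift:
  fixes p d k :: int
  assumes "p > 0" and P: "\<And>x. P (x + p) = P x" and Q: "\<And>x. Q (x + p) = Q x"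
    and PQ: "\<And>j. P j \<Longrightarrow> Q (j + d)" and "Q k" and "\<not> P (k - d)"
  shows "card {j \<in> {0..<p}. P j} < card {j \<in> {0..<p}. Q j}"
proof -
  let ?k = "(k - d) mod p"
  have "Q (?k + d)"
    using periodic_mod_cong[of Q p k "?k + d", OF Q] \<open>Q k\<close> by (simp add: mod_add_left_eq)
  moreover have "\<not> P ?k"
    using periodic_mod[of P p, OF P] \<open>\<not> P (k - d)\<close> by simp
  ultimately have "{j \<in> {0..<p}. P j} \<subset> {j \<in> {0..<p}. Q (j + d)}"
    using PQ \<open>p > 0\<close> by fastforce
  then have "card {j \<in> {0..<p}. P j} < card {j \<in> {0..<p}. Q (j + d)}"
    by (rule psubset_card_mono[OF finite_residues])
  also have "\<dots> = card {j \<in> {0..<p}. Q j}"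
    using \<open>p > 0\<close> Q by (rule card_residues_shift)
  finally show ?thesis .
qed

lemma occ_Fin_shift:
  assumes "periodic c" and "\<And>j. occurs_at t c j \<longleftrightarrow> occurs_at s c (j + d)"
  shows "occ (Fin t) c = occ (Fin s) c"
  using card_residues_shift[of "int (period c)" "occurs_at s c" d] assms
  by (simp add: period_pos occurs_at_add_period)

lemma occ_Fin_less_shift:
  assumes "periodic c" and "\<And>j. occurs_at t c j \<Longrightarrow> occurs_at s c (j + d)"
    and "occurs_at s c k" and "\<not> occurs_at t c (k - d)"
  shows "occ (Fin t) c < occ (Fin s) c"
  unfolding occ.simps
  by (rule card_residues_less_shift) (use assms in \<open>simp_all add: period_pos occurs_at_add_period\<close>)

lemma occ_Fin_pos:
  assumes "periodic c" and "occurs_at s c j"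
  shows "occ (Fin s) c > 0"
proof -
  have "j mod int (period c) \<in> {i \<in> {0..<int (period c)}. occurs_at s c i}"
    using assms by (simp add: occurs_at_mod_period period_pos)
  then show ?thesis
    unfolding occ.simps card_gt_0_iff using finite_residues by blast
qed

lemma two_le_occ_Fin:
  assumes "periodic c" and "occurs_at s c i" and "occurs_at s c j"
    and "i mod int (period c) \<noteq> j mod int (period c)"
  shows "2 \<le> occ (Fin s) c"
proof -
  have "{i mod int (period c), j mod int (period c)} \<subseteq> {x \<in> {0..<int (period c)}. occurs_at s c x}"
    using assms by (simp add: occurs_at_mod_period period_pos)
  then have "card {i mod int (period c), j mod int (period c)} \<le> occ (Fin s) c"
    unfolding occ.simps by (rule card_mono[OF finite_residues])
  then show ?thesis
    using assms(4) by simp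
qed

lemma chromosome_set_periodic: "chromosome_set C \<Longrightarrow> c \<in> C \<Longrightarrow> periodic c"
  unfolding chromosome_set_def by blast

lemma substr_C_Cons:
  "substr_C (Fin (a # s)) C \<longleftrightarrow> (\<exists>c\<in>C. \<exists>j. occurs_at s c (j + 1) \<and> c j = a)"
  unfolding substr_C_def substr.simps occurs_at_Cons by blast

lemma substr_C_snoc:
  "substr_C (Fin (s @ [a])) C \<longleftrightarrow> (\<exists>c\<in>C. \<exists>j. occurs_at s c j \<and> c (j + int (length s)) = a)"
  unfolding substr_C_def substr.simps occurs_at_append occurs_at_singleton by blast

lemma not_MES_if_unique_left_extension:
  assumes "chromosome_set C" and "\<And>c j. c \<in> C \<Longrightarrow> occurs_at s c (j + 1) \<Longrightarrow> c j = a"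
  shows "\<not> MES C (Fin s)"
proof -
  have "occ (Fin (a # s)) c = occ (Fin s) c" if "c \<in> C" for c
    using assms chromosome_set_periodic that
    by (intro occ_Fin_shift[where d = 1]) (auto simp: occurs_at_Cons)
  moreover have "substr (Fin s) (Fin (a # s))"
    by (auto intro: exI[of _ "[a]"])
  moreover have "\<not> same_str (Fin (a # s)) (Fin s)"
    by simp
  ultimately show ?thesis
    unfolding MES_def by (metis less_irrefl valid_str.simps(1))
qed

lemma not_MES_if_unique_right_extension:
  assumes "chromosome_set C"
    and "\<And>c j. c \<in> C \<Longrightarrow> occurs_at s c j \<Longrightarrow> c (j + int (length s)) = a"
  shows "\<not> MES C (Fin s)"
proof -
  have "occ (Fin (s @ [a])) c = occ (Fin s) c" if "c \<in> C" for c
    using assms chromosome_set_periodic that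
    by (intro occ_Fin_shift[where d = 0]) (auto simp: occurs_at_append)
  moreover have "substr (Fin s) (Fin (s @ [a]))"
    by (auto intro: exI[of _ "[]"])
  moreover have "\<not> same_str (Fin (s @ [a])) (Fin s)"
    by simp
  ultimately show ?thesis
    unfolding MES_def by (metis less_irrefl valid_str.simps(1))
qed

lemma MES_imp_two_left_extensions:
  assumes "chromosome_set C" and "MES C (Fin s)"
  shows "\<exists>c1 c2. c1 \<noteq> c2 \<and> substr_C (Fin (c1 # s)) C \<and> substr_C (Fin (c2 # s)) C"
proof (rule ccontr)
  assume unique: "\<not> ?thesis"
  have extension: "substr_C (Fin (c j # s)) C" if "c \<in> C" "occurs_at s c (j + 1)" for c j
    unfolding substr_C_Cons using that by blast
  from assms(2) obtain c0 j0 where "c0 \<in> C" "occurs_at s c0 (j0 - 1 + 1)"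
    unfolding MES_def substr_C_def by auto
  then have "c j = c0 (j0 - 1)" if "c \<in> C" "occurs_at s c (j + 1)" for c j
    using unique extension that by blast
  then have "\<not> MES C (Fin s)"
    by (rule not_MES_if_unique_left_extension[OF assms(1)])
  with assms(2) show False
    by contradiction
qed

lemma MES_imp_two_right_extensions:
  assumes "chromosome_set C" and "MES C (Fin s)"
  shows "\<exists>c3 c4. c3 \<noteq> c4 \<and> substr_C (Fin (s @ [c3])) C \<and> substr_C (Fin (s @ [c4])) C"
proof (rule ccontr)
  assume unique: "\<not> ?thesis"
  have extension: "substr_C (Fin (s @ [c (j + int (length s))])) C" if "c \<in> C" "occurs_at s c j" for c j
    unfolding substr_C_snoc using that by blast
  from assms(2) obtain c0 j0 where "c0 \<in> C" "occurs_at s c0 j0"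
    unfolding MES_def substr_C_def by auto
  then have "c (j + int (length s)) = c0 (j0 + int (length s))" if "c \<in> C" "occurs_at s c j" for c j
    using unique extension that by blast
  then have "\<not> MES C (Fin s)"
    by (rule not_MES_if_unique_right_extension[OF assms(1)])
  with assms(2) show False
    by contradiction
qed

lemma occ_Fin_less_left_mismatch:
  assumes "periodic c" and "occurs_at s c (j + 1)" and "c j \<noteq> last u" and "u \<noteq> []"
  shows "occ (Fin (u @ s @ v)) c < occ (Fin s) c"
proof (rule occ_Fin_less_shift[where d = "int (length u)" and k = "j + 1"])
  show "\<not> occurs_at (u @ s @ v) c (j + 1 - int (length u))"
  proof
    assume "occurs_at (u @ s @ v) c (j + 1 - int (length u))"
    then have "occurs_at (butlast u @ [last u]) c (j + 1 - int (length u))"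
      using \<open>u \<noteq> []\<close> by (simp add: occurs_at_append)
    moreover have "j + 1 - int (length u) + int (length (butlast u)) = j"
      using \<open>u \<noteq> []\<close> by (simp add: of_nat_diff Suc_le_eq)
    ultimately have "c j = last u"
      by (simp add: occurs_at_append)
    with \<open>c j \<noteq> last u\<close> show False ..
  qed
qed (use assms in \<open>simp_all add: occurs_at_append\<close>)

lemma occ_Fin_less_right_mismatch:
  assumes "periodic c" and "occurs_at s c j" and "c (j + int (length s)) \<noteq> hd v" and "v \<noteq> []"
  shows "occ (Fin (u @ s @ v)) c < occ (Fin s) c"
proof (rule occ_Fin_less_shift[where d = "int (length u)" and k = j])
  show "\<not> occurs_at (u @ s @ v) c (j - int (length u))"
  proof
    assume "occurs_at (u @ s @ v) c (j - int (length u))"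
    then have "occurs_at (hd v # tl v) c (j + int (length s))"
      using \<open>v \<noteq> []\<close> by (simp add: occurs_at_append ac_simps)
    then have "c (j + int (length s)) = hd v"
      by (simp add: occurs_at_Cons)
    with \<open>c (j + int (length s)) \<noteq> hd v\<close> show False ..
  qed
qed (use assms in \<open>simp_all add: occurs_at_append\<close>)

lemma occ_Cyc_less:
  assumes "chromosome_set C" and "c1 \<noteq> c2"
    and "substr_C (Fin (c1 # s)) C" and "substr_C (Fin (c2 # s)) C"
  shows "\<exists>c\<in>C. occ (Cyc w) c < occ (Fin s) c"
proof -
  from assms(3,4) obtain c c' where c: "c \<in> C" "substr (Fin (c1 # s)) (Cyc c)"
    and c': "c' \<in> C" "substr (Fin (c2 # s)) (Cyc c')"
    unfolding substr_C_def by blast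
  from assms(1) c(1) have "periodic c"
    by (rule chromosome_set_periodic)
  show ?thesis
  proof (cases "shift_eq w c \<and> shift_eq w c'")
    case False
    have "occ (Fin s) x > 0" if "x \<in> C" "substr (Fin (a # s)) (Cyc x)" for x a
    proof -
      from that(2) obtain j where "occurs_at s x (j + 1)"
        by (auto simp: occurs_at_Cons)
      with chromosome_set_periodic[OF assms(1) that(1)] show ?thesis
        by (rule occ_Fin_pos)
    qed
    then show ?thesis
      using False c c' by force
  next
    case True
    then have "substr (Fin (c2 # s)) (Cyc c)"
      using c'(2) substr_Cyc_shift_eq by blast
    with c(2) obtain j1 j2 where j1: "c j1 = c1" "occurs_at s c (j1 + 1)"
      and j2: "c j2 = c2" "occurs_at s c (j2 + 1)"
      by (auto simp: occurs_at_Cons)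
    have "(j1 + 1) mod int (period c) \<noteq> (j2 + 1) mod int (period c)"
    proof
      assume "(j1 + 1) mod int (period c) = (j2 + 1) mod int (period c)"
      then have "j1 mod int (period c) = j2 mod int (period c)"
        by (simp add: mod_eq_dvd_iff)
      then have "c j1 = c j2"
        using periodic_add_period[OF \<open>periodic c\<close>] by (rule periodic_mod_cong[rotated])
      with j1 j2 \<open>c1 \<noteq> c2\<close> show False by simp
    qed
    then have "2 \<le> occ (Fin s) c"
      using two_le_occ_Fin \<open>periodic c\<close> j1(2) j2(2) by blast
    then show ?thesis
      using c(1) by (intro bexI[of _ c]) simp_all
  qed
qed

lemma MES_if_two_left_and_right_extensions:
  assumes C: "chromosome_set C"
    and left: "c1 \<noteq> c2" "substr_C (Fin (c1 # s)) C" "substr_C (Fin (c2 # s)) C"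
    and right: "c3 \<noteq> c4" "substr_C (Fin (s @ [c3])) C" "substr_C (Fin (s @ [c4])) C"
  shows "MES C (Fin s)"
proof -
  have left_mismatch: "\<exists>c\<in>C. \<exists>j. occurs_at s c (j + 1) \<and> c j \<noteq> a" for a
    using left unfolding substr_C_Cons by metis
  have right_mismatch: "\<exists>c\<in>C. \<exists>j. occurs_at s c j \<and> c (j + int (length s)) \<noteq> a" for a
    using right unfolding substr_C_snoc by metis
  have "\<exists>c\<in>C. occ t c < occ (Fin s) c" if "\<not> same_str t (Fin s)" "substr (Fin s) t" for t
  proof (cases t)
    case (Fin x)
    with that obtain u v where x: "x = u @ s @ v"
      by auto
    with Fin that have "u \<noteq> [] \<or> v \<noteq> []"
      by auto
    then consider "u \<noteq> []" | "v \<noteq> []"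
      by blast
    then show ?thesis
    proof cases
      case 1
      with left_mismatch[of "last u"] show ?thesis
        using Fin x chromosome_set_periodic[OF C] occ_Fin_less_left_mismatch by metis
    next
      case 2
      with right_mismatch[of "hd v"] show ?thesis
        using Fin x chromosome_set_periodic[OF C] occ_Fin_less_right_mismatch by metis
    qed
  next
    case (Cyc w)
    then show ?thesis
      using occ_Cyc_less[OF C left] by simp
  qed
  moreover have "substr_C (Fin s) C"
    using left_mismatch[of undefined] unfolding substr_C_def by auto
  ultimately show ?thesis
    unfolding MES_def by blast
qed

theorem theorem9:
  fixes C :: "(int \<Rightarrow> 'a::finite) set" and s :: "'a list"
  assumes "chromosome_set C"
  shows "MES C (Fin s) \<longleftrightarrow>
    (\<exists>c1 c2 c3 c4. c1 \<noteq> c2 \<and> c3 \<noteq> c4 \<and>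
       substr_C (Fin (c1 # s)) C \<and> substr_C (Fin (c2 # s)) C \<and>
       substr_C (Fin (s @ [c3])) C \<and> substr_C (Fin (s @ [c4])) C)"
  using MES_imp_two_left_extensions[OF assms] MES_imp_two_right_extensions[OF assms]
    MES_if_two_left_and_right_extensions[OF assms]
  by blast

end
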